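(* Let $a,b,c$ be pairwise coprime positive integers and let $G$ be an $(a,b,c)$-group with $(a,b,c)$-generators $x,y$, i.e. $G$ is a finite group generated by $x,y$ with $\operatorname{ord}(x)=a$, $\operatorname{ord}(y)=b$ and $\operatorname{ord}(xy)=c$. Then the Veech group of the regular origami $(G,y,x)$ is a totally non-congruence group.
   Context: A regular origami $(G,u,v)$ is given by a finite group $G$ generated by two elements $u,v$: it is the translation surface obtained from unit squares indexed by the elements $g\in G$, where the right edge of square $g$ is glued to the left edge of square $gu$ and the top edge of square $g$ is glued to the bottom edge of square $gv$. Two regular origamis $(G,u,v)$, $(G',u',v')$ are identified if there is a group isomorphism $G\to G'$ with $u\mapsto u'$, $v\mapsto v'$. The group $\mathrm{SL}(2,\mathbb{Z})$ acts on regular origamis via $S\cdot(G,u,v)=(G,v^{-1},u)$ and $T\cdot(G,u,v)=(G,u,vu^{-1})$, where $S=\begin{pmatrix}0&-1\\1&0\end{pmatrix}$, $T=\begin{pmatrix}1&1\\0&1\end{pmatrix}$. The Veech group of a regular origami is its stabilizer under this action, a finite index subgroup of $\mathrm{SL}(2,\mathbb{Z})$. A finite index subgroup $\Gamma\le\mathrm{SL}(2,\mathbb{Z})$ is a totally non-congruence group if for every integer $n\ge1$ the reduction map $\mathrm{SL}(2,\mathbb{Z})\to\mathrm{SL}(2,\mathbb{Z}/n\mathbb{Z})$ restricted to $\Gamma$ is surjective. *)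

theory Defs
  imports "HOL-Algebra.Algebra"
begin

text \<open>Integer 2x2 matrices: (a,b,c,d) stands for the matrix with rows (a b) and (c d).\<close>
type_synonym imat2 = "int \<times> int \<times> int \<times> int"

definition imat_mult :: "imat2 \<Rightarrow> imat2 \<Rightarrow> imat2" where
  "imat_mult M N = (case M of (a,b,c,d) \<Rightarrow> case N of (e,f,g,h) \<Rightarrow>
      (a*e + b*g, a*f + b*h, c*e + d*g, c*f + d*h))"

definition imat_det :: "imat2 \<Rightarrow> int" where
  "imat_det M = (case M of (p,q,r,s) \<Rightarrow> p*s - q*r)"

definition imat_id :: imat2 where "imat_id = (1,0,0,1)"

datatype gen = GS | GT | GSinv | GTinv

definition gen_mat :: "gen \<Rightarrow> imat2" where
  "gen_mat g = (case g of GS \<Rightarrow> (0,-1,1,0) | GT \<Rightarrow> (1,1,0,1)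
                 | GSinv \<Rightarrow> (0,1,-1,0) | GTinv \<Rightarrow> (1,-1,0,1))"

fun word_mat :: "gen list \<Rightarrow> imat2" where
  "word_mat [] = imat_id"
| "word_mat (g # w) = imat_mult (gen_mat g) (word_mat w)"

definition gen_act :: "('a, 'b) monoid_scheme \<Rightarrow> gen \<Rightarrow> 'a \<times> 'a \<Rightarrow> 'a \<times> 'a" where
  "gen_act G g p = (case p of (u, v) \<Rightarrow> (case g of
       GS \<Rightarrow> (inv\<^bsub>G\<^esub> v, u)
     | GT \<Rightarrow> (u, v \<otimes>\<^bsub>G\<^esub> inv\<^bsub>G\<^esub> u)
     | GSinv \<Rightarrow> (v, inv\<^bsub>G\<^esub> u)
     | GTinv \<Rightarrow> (u, v \<otimes>\<^bsub>G\<^esub> u)))"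

fun word_act :: "('a, 'b) monoid_scheme \<Rightarrow> gen list \<Rightarrow> 'a \<times> 'a \<Rightarrow> 'a \<times> 'a" where
  "word_act G [] p = p"
| "word_act G (g # w) p = gen_act G g (word_act G w p)"

text \<open>Regular origamis (G,u,v) and (G,u',v') on the same group are identified
  iff some automorphism of G maps u to u' and v to v'.\<close>
definition origami_equiv :: "('a, 'b) monoid_scheme \<Rightarrow> 'a \<times> 'a \<Rightarrow> 'a \<times> 'a \<Rightarrow> bool" where
  "origami_equiv G p q \<longleftrightarrow> (\<exists>\<phi> \<in> iso G G. \<phi> (fst p) = fst q \<and> \<phi> (snd p) = snd q)"

text \<open>Veech group of the regular origami (G,u,v): the stabilizer of (G,u,v) under the
  SL(2,Z)-action, i.e. all matrices M (given as words in S, T and their inverses)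
  with M.(G,u,v) identified with (G,u,v).\<close>
definition veech_group :: "('a, 'b) monoid_scheme \<Rightarrow> 'a \<Rightarrow> 'a \<Rightarrow> imat2 set" where
  "veech_group G u v = {word_mat w | w. origami_equiv G (word_act G w (u, v)) (u, v)}"

definition imat_cong :: "imat2 \<Rightarrow> imat2 \<Rightarrow> int \<Rightarrow> bool" where
  "imat_cong M N n = (case M of (a,b,c,d) \<Rightarrow> case N of (e,f,g,h) \<Rightarrow>
      a mod n = e mod n \<and> b mod n = f mod n \<and> c mod n = g mod n \<and> d mod n = h mod n)"

text \<open>Totally non-congruence: for every n >= 1 the reduction mod n maps the group onto
  SL(2,Z/nZ), whose elements are represented by integer matrices with determinant
  congruent to 1 modulo n.\<close>
definition totally_noncongruence :: "imat2 set \<Rightarrow> bool" where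
  "totally_noncongruence \<Gamma> \<longleftrightarrow>
     (\<forall>n::int. n \<ge> 1 \<longrightarrow> (\<forall>M. imat_det M mod n = 1 mod n \<longrightarrow> (\<exists>N \<in> \<Gamma>. imat_cong N M n)))"

end

theory Submission imports Defs "HOL-Number_Theory.Cong" begin

(* The Veech group of (G,y,x) contains the matrices of all words fixing the pair (y,x) itself.
   Among them are T^b, A^a with A = S T S^-1, and A^-1 T^c A, whose matrices are the
   transvections transv12 b, transv21 (-a) and transv_conj c.  A monoid of integer matrices
   containing these three maps onto SL(2,Z/nZ) for every n: write n = q m with m coprime to b
   and every prime of q dividing b.  Modulo m, b is a unit, so a power of transv12 b is congruent
   to any prescribed transv12 r; modulo q, a and c are units and conjugating
   transv_conj by transv21 (-1) produces transv12.  The Chinese remainder theorem combines the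
   two, an anti-automorphism exchanging a and b gives transv21 as well, and transvections
   generate SL(2,Z), which maps onto SL(2,Z/nZ). *)

notation imat_mult (infixl "**" 70)

lemma imat_mult_assoc: "A ** B ** C = A ** (B ** C)"
  by (cases A; cases B; cases C) (simp add: imat_mult_def algebra_simps)

lemma imat_mult_id [simp]: "imat_id ** A = A" "A ** imat_id = A"
  by (cases A; simp add: imat_mult_def imat_id_def)+

lemma imat_det_mult: "imat_det (A ** B) = imat_det A * imat_det B"
  by (cases A; cases B) (simp add: imat_det_def imat_mult_def algebra_simps)

lemma imat_cong_iff:
  "imat_cong (p, q, r, s) (p', q', r', s') n \<longleftrightarrow>
     [p = p'] (mod n) \<and> [q = q'] (mod n) \<and> [r = r'] (mod n) \<and> [s = s'] (mod n)"
  by (simp add: imat_cong_def cong_def)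

lemma imat_cong_refl [simp]: "imat_cong M M n"
  by (cases M) (simp add: imat_cong_def)

lemma imat_cong_trans: "imat_cong L M n \<Longrightarrow> imat_cong M N n \<Longrightarrow> imat_cong L N n"
  by (cases L; cases M; cases N) (simp add: imat_cong_def)

lemma imat_cong_mult:
  "imat_cong A A' n \<Longrightarrow> imat_cong B B' n \<Longrightarrow> imat_cong (A ** B) (A' ** B') n"
  by (cases A; cases A'; cases B; cases B')
    (auto simp: imat_cong_iff imat_mult_def intro!: cong_add cong_mult)

lemma imat_cong_mult_modulus:
  assumes "coprime q (m::int)" "imat_cong M N q" "imat_cong M N m"
  shows "imat_cong M N (q * m)"
  using assms
  by (cases M; cases N) (auto simp: imat_cong_iff cong_iff_dvd_diff intro: divides_mult)

definition transv12 :: "int \<Rightarrow> imat2" where "transv12 t = (1, t, 0, 1)"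
definition transv21 :: "int \<Rightarrow> imat2" where "transv21 t = (1, 0, t, 1)"

lemma transv12_add: "transv12 s ** transv12 t = transv12 (s + t)"
  and transv21_add: "transv21 s ** transv21 t = transv21 (s + t)"
  by (simp_all add: transv12_def transv21_def imat_mult_def)

lemma transv12_0 [simp]: "transv12 0 = imat_id" and transv21_0 [simp]: "transv21 0 = imat_id"
  by (simp_all add: transv12_def transv21_def imat_id_def)

lemma imat_cong_transv12: "[s = t] (mod n) \<Longrightarrow> imat_cong (transv12 s) (transv12 t) n"
  and imat_cong_transv21: "[s = t] (mod n) \<Longrightarrow> imat_cong (transv21 s) (transv21 t) n"
  by (simp_all add: transv12_def transv21_def imat_cong_iff)

inductive_set elementary :: "imat2 set" where
  elementary_id: "imat_id \<in> elementary"
| elementary_transv12: "M \<in> elementary \<Longrightarrow> transv12 t ** M \<in> elementary"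
| elementary_transv21: "M \<in> elementary \<Longrightarrow> transv21 t ** M \<in> elementary"

lemma elementary_mult: "P \<in> elementary \<Longrightarrow> R \<in> elementary \<Longrightarrow> P ** R \<in> elementary"
  by (induction P rule: elementary.induct) (auto simp: imat_mult_assoc intro: elementary.intros)

lemma transv12_elementary: "transv12 t \<in> elementary"
  and transv21_elementary: "transv21 t \<in> elementary"
  using elementary_transv12[OF elementary_id] elementary_transv21[OF elementary_id] by simp_all

lemma imat_det_id [simp]: "imat_det imat_id = 1"
  and imat_det_transv12 [simp]: "imat_det (transv12 t) = 1"
  and imat_det_transv21 [simp]: "imat_det (transv21 t) = 1"
  by (simp_all add: imat_det_def imat_id_def transv12_def transv21_def)

lemma elementary_det: "P \<in> elementary \<Longrightarrow> imat_det P = 1"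
  by (induction P rule: elementary.induct) (simp_all add: imat_det_mult)

lemma quarter_turn_elementary: "(0, -1, 1, 0) \<in> elementary"
proof -
  have "(0, -1, 1, 0) = transv12 (-1) ** transv21 1 ** transv12 (-1)"
    by (simp add: transv12_def transv21_def imat_mult_def)
  then show ?thesis
    by (simp add: elementary_mult transv12_elementary transv21_elementary)
qed

lemma upper_triangular_decomposition:
  "\<exists>Q\<in>elementary. \<exists>g h k. M = Q ** (g, h, 0, k)"
proof (induction "nat \<bar>fst (snd (snd M))\<bar>" arbitrary: M rule: less_induct)
  case less
  obtain p q r s where M_eq: "M = (p, q, r, s)" by (cases M) auto
  show ?case
  proof (cases "r = 0")
    case True
    then show ?thesis using M_eq elementary_id by force
  next
    case False
    define M' where "M' = (r, s, - (p mod r), - (q - p div r * s))"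
    have "\<bar>p mod r\<bar> < \<bar>r\<bar>" using False by (rule abs_mod_less)
    then have "nat \<bar>fst (snd (snd M'))\<bar> < nat \<bar>fst (snd (snd M))\<bar>"
      by (simp add: M_eq M'_def)
    then obtain Q' g h k where Q': "Q' \<in> elementary" "M' = Q' ** (g, h, 0, k)"
      using less.hyps by blast
    have "M = transv12 (p div r) ** (0, -1, 1, 0) ** M'"
      by (simp add: M_eq M'_def transv12_def imat_mult_def algebra_simps)
    then have "M = (transv12 (p div r) ** (0, -1, 1, 0) ** Q') ** (g, h, 0, k)"
      using Q' by (simp add: imat_mult_assoc)
    moreover have "transv12 (p div r) ** (0, -1, 1, 0) ** Q' \<in> elementary"
      using Q' by (intro elementary_mult transv12_elementary quarter_turn_elementary)
    ultimately show ?thesis by blast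
  qed
qed

lemma det_one_elementary:
  assumes "imat_det M = 1"
  shows "M \<in> elementary"
proof -
  obtain Q g h k where Q: "Q \<in> elementary" "M = Q ** (g, h, 0, k)"
    using upper_triangular_decomposition by blast
  then have "g * k = 1"
    using assms by (simp add: imat_det_mult elementary_det) (simp add: imat_det_def)
  then have "g = k \<and> (g = 1 \<or> g = -1)" by (auto simp: zmult_eq_1_iff)
  moreover have "(-1, h, 0, -1) = (0, -1, 1, 0) ** (0, -1, 1, 0) ** transv12 (-h)"
    by (simp add: transv12_def imat_mult_def)
  ultimately have "(g, h, 0, k) \<in> elementary"
    by (auto simp: transv12_def[symmetric]
        intro!: elementary_mult transv12_elementary quarter_turn_elementary)
  then show ?thesis using Q by (simp add: elementary_mult)
qed

lemma det_one_lift: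
  assumes "[imat_det M = 1] (mod n)"
  shows "\<exists>Y. imat_det Y = 1 \<and> imat_cong Y M n"
proof -
  obtain Q g h k where Q: "Q \<in> elementary" "M = Q ** (g, h, 0, k)"
    using upper_triangular_decomposition by blast
  define e where "e = 1 - g * k"
  have "[g * k = 1] (mod n)"
    using assms Q by (simp add: imat_det_mult elementary_det) (simp add: imat_det_def)
  then have "n dvd e" unfolding e_def by (simp add: cong_iff_dvd_diff dvd_diff_commute)
  \<comment> \<open>a perturbation of (g, h, 0, k) by multiples of e whose determinant is exactly 1\<close>
  define D where "D = (g + g * e, (1 - e) * (1 + e) * h - e, e, e * k * h + k)"
  have "(1 - e) * (1 + e) * h - e - h = e * (- e * h - 1)"
    by (simp add: algebra_simps)
  then have "imat_cong D (g, h, 0, k) n"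
    using \<open>n dvd e\<close> by (simp add: D_def imat_cong_iff cong_iff_dvd_diff)
  then have "imat_cong (Q ** D) M n"
    using Q by (simp add: imat_cong_mult)
  moreover have "imat_det (Q ** D) = 1"
    using Q by (simp add: imat_det_mult elementary_det)
      (simp add: D_def imat_det_def e_def algebra_simps)
  ultimately show ?thesis by blast
qed

lemma coprime_split:
  fixes n b :: int
  assumes "0 < n"
  shows "\<exists>q m. n = q * m \<and> coprime q m \<and> coprime m b \<and> (\<forall>d. coprime d b \<longrightarrow> coprime d q)"
  using assms
proof (induction "nat n" arbitrary: n rule: less_induct)
  case less
  show ?case
  proof (cases "coprime n b")
    case True
    then show ?thesis by (intro exI[of _ 1] exI[of _ n]) auto
  next
    case False
    define g where "g = gcd n b"
    have "g \<noteq> 1" "g \<noteq> 0"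
      using False less.prems by (auto simp: g_def coprime_iff_gcd_eq_1)
    then have "g > 1" using gcd_ge_0_int[of n b] unfolding g_def by linarith
    obtain n' where n': "n = g * n'" unfolding g_def by (meson gcd_dvd1 dvdE)
    have "0 < n'" "n' < n" using n' \<open>g > 1\<close> less.prems by (auto simp: zero_less_mult_iff)
    then obtain q m where qm: "n' = q * m" "coprime q m" "coprime m b"
        "\<forall>d. coprime d b \<longrightarrow> coprime d q"
      using less.hyps[of n'] by auto
    have "g dvd b" by (simp add: g_def)
    then have "coprime g m" using qm(3) by (meson coprime_commute coprime_divisors dvd_refl)
    moreover have "coprime d (g * q)" if "coprime d b" for d
      using that qm(4) \<open>g dvd b\<close> by (meson coprime_divisors coprime_mult_right_iff dvd_refl)
    ultimately show ?thesis
      using qm n' by (intro exI[of _ "g * q"] exI[of _ m]) (auto simp: mult.assoc)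
  qed
qed

lemma cong_solve_coprime_linear:
  fixes a n r :: int
  assumes "coprime a n"
  shows "\<exists>t. [a * t = r] (mod n)"
proof -
  obtain y where "[a * y = 1] (mod n)" using cong_solve_coprime_int assms by blast
  then have "[a * (y * r) = 1 * r] (mod n)" by (metis cong_scalar_right mult.assoc)
  then show ?thesis by auto
qed

text \<open>Transposition followed by conjugation with diag(1, -1).\<close>
definition imat_flip :: "imat2 \<Rightarrow> imat2" where
  "imat_flip M = (case M of (p, q, r, s) \<Rightarrow> (p, - r, - q, s))"

lemma imat_flip_flip [simp]: "imat_flip (imat_flip M) = M"
  by (cases M) (simp add: imat_flip_def)

lemma imat_flip_mult: "imat_flip (A ** B) = imat_flip B ** imat_flip A"
  by (cases A; cases B) (simp add: imat_flip_def imat_mult_def algebra_simps)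

lemma imat_flip_id [simp]: "imat_flip imat_id = imat_id"
  and imat_flip_transv12 [simp]: "imat_flip (transv12 t) = transv21 (- t)"
  and imat_flip_transv21 [simp]: "imat_flip (transv21 t) = transv12 (- t)"
  by (simp_all add: imat_flip_def imat_id_def transv12_def transv21_def)

lemma imat_cong_flip: "imat_cong M N n \<Longrightarrow> imat_cong (imat_flip M) (imat_flip N) n"
  by (cases M; cases N) (simp add: imat_flip_def imat_cong_iff cong_minus_minus_iff)

text \<open>The matrix of A^-1 T^t A for A = S T S^-1.\<close>
definition transv_conj :: "int \<Rightarrow> imat2" where
  "transv_conj t = transv21 1 ** transv12 t ** transv21 (- 1)"

lemma transv_conj_0 [simp]: "transv_conj 0 = imat_id"
  by (simp add: transv_conj_def transv21_add)

lemma transv_conj_add: "transv_conj s ** transv_conj t = transv_conj (s + t)"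
  by (simp add: transv_conj_def transv12_def transv21_def imat_mult_def algebra_simps)

lemma imat_flip_transv_conj [simp]: "imat_flip (transv_conj t) = transv_conj t"
  by (simp add: transv_conj_def imat_flip_def transv12_def transv21_def imat_mult_def)

lemma imat_cong_transv_conj: "[s = t] (mod n) \<Longrightarrow> imat_cong (transv_conj s) (transv_conj t) n"
  by (simp add: transv_conj_def imat_cong_mult imat_cong_transv12)

locale abc_monoid =
  fixes \<Gamma> :: "imat2 set" and a b c :: int
  assumes mult_mem: "P \<in> \<Gamma> \<Longrightarrow> R \<in> \<Gamma> \<Longrightarrow> P ** R \<in> \<Gamma>"
    and id_mem: "imat_id \<in> \<Gamma>"
    and transv12_mem: "transv12 b \<in> \<Gamma>"
    and transv21_mem: "transv21 (- a) \<in> \<Gamma>"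
    and transv_conj_mem: "transv_conj c \<in> \<Gamma>"
    and coprime_ab: "coprime a b" and coprime_bc: "coprime b c" and coprime_ac: "coprime a c"
begin

lemma abc_monoid_flip: "abc_monoid (imat_flip ` \<Gamma>) b a c"
proof
  show "P ** R \<in> imat_flip ` \<Gamma>" if "P \<in> imat_flip ` \<Gamma>" "R \<in> imat_flip ` \<Gamma>" for P R
    using that mult_mem by (auto simp: image_iff imat_flip_mult[symmetric])
  show "imat_id \<in> imat_flip ` \<Gamma>" "transv12 a \<in> imat_flip ` \<Gamma>" "transv21 (- b) \<in> imat_flip ` \<Gamma>"
    "transv_conj c \<in> imat_flip ` \<Gamma>"
    using id_mem transv21_mem transv12_mem transv_conj_mem by (force intro: rev_image_eqI)+
qed (use coprime_ab coprime_bc coprime_ac in \<open>simp_all add: coprime_commute\<close>)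

definition represented :: "int \<Rightarrow> imat2 \<Rightarrow> bool" where
  "represented n M \<longleftrightarrow> (\<exists>N\<in>\<Gamma>. imat_cong N M n)"

lemma represented_mult: "represented n M \<Longrightarrow> represented n N \<Longrightarrow> represented n (M ** N)"
  unfolding represented_def using mult_mem imat_cong_mult by blast

lemma represented_cong: "represented n M \<Longrightarrow> imat_cong M N n \<Longrightarrow> represented n N"
  unfolding represented_def using imat_cong_trans by blast

lemma represented_multiple:
  assumes "f x \<in> \<Gamma>" "f 0 = imat_id" "\<And>s t. f s ** f t = f (s + t)"
    and "\<And>s t. [s = t] (mod n) \<Longrightarrow> imat_cong (f s) (f t) n" and "0 < n"
  shows "represented n (f (x * t))"
proof -
  have "f (x * int k) \<in> \<Gamma>" for k
  proof (induction k)
    case (Suc k)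
    then show ?case using mult_mem[OF assms(1) Suc] assms(3) by (simp add: algebra_simps)
  qed (simp add: assms(2) id_mem)
  then have "represented n (f (x * (t mod n)))"
    using \<open>0 < n\<close> unfolding represented_def
    by (metis imat_cong_refl int_nat_eq pos_mod_sign)
  moreover have "[x * (t mod n) = x * t] (mod n)"
    by (simp add: cong_def mod_mult_right_eq)
  ultimately show ?thesis using assms(4) represented_cong by blast
qed

lemma represented_transv12:
  assumes "0 < n"
  shows "represented n (transv12 r)"
proof -
  obtain q m where qm: "n = q * m" "coprime q m" "coprime m b"
    "\<forall>d. coprime d b \<longrightarrow> coprime d q"
    using coprime_split[OF assms] by blast
  have "coprime (a * m) q" "coprime (c * m) q"
    using qm coprime_ab coprime_bc by (simp_all add: coprime_commute)
  obtain k where k: "[b * k = r] (mod m)"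
    using cong_solve_coprime_linear qm(3) by (metis coprime_commute)
  obtain t1 t2 t3 where "[a * m * t1 = 1] (mod q)" "[a * m * t2 = - 1] (mod q)"
    "[c * m * t3 = r - b * k] (mod q)"
    using cong_solve_coprime_linear \<open>coprime (a * m) q\<close> \<open>coprime (c * m) q\<close> by metis
  then have t: "[- (a * (m * t1)) = - 1] (mod q)" "[- (a * (m * t2)) = 1] (mod q)"
    "[c * (m * t3) = r - b * k] (mod q)"
    by (simp_all add: mult.assoc cong_minus_minus_iff)
      (metis cong_minus_minus_iff minus_minus)
  define N where "N = transv21 (- (a * (m * t1))) ** transv_conj (c * (m * t3)) **
    transv21 (- (a * (m * t2))) ** transv12 (b * k)"
  have "imat_cong N (transv21 (- 1) ** transv_conj (r - b * k) ** transv21 1 ** transv12 (b * k)) q"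
    unfolding N_def using t
    by (intro imat_cong_mult imat_cong_transv21 imat_cong_transv_conj imat_cong_refl)
  then have "imat_cong N (transv12 r) q"
    by (simp add: transv_conj_def transv12_def transv21_def imat_mult_def)
  moreover have "imat_cong N (imat_id ** imat_id ** imat_id ** transv12 r) m"
  proof -
    have "imat_cong (transv21 (- (a * (m * t)))) imat_id m" for t
      using imat_cong_transv21[of "- (a * (m * t))" 0 m] by (simp add: cong_0_iff)
    moreover have "imat_cong (transv_conj (c * (m * t3))) imat_id m"
      using imat_cong_transv_conj[of "c * (m * t3)" 0 m] by (simp add: cong_0_iff)
    ultimately show ?thesis
      unfolding N_def using k by (intro imat_cong_mult imat_cong_transv12)
  qed
  moreover have "represented n N"
    unfolding N_def using assms transv12_mem transv21_mem transv_conj_mem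
    by (intro represented_mult represented_multiple[where f = transv12]
        represented_multiple[where f = "\<lambda>s. transv21 (- s)"] represented_multiple[where f = transv_conj])
      (simp_all add: transv12_add transv21_add transv_conj_add imat_cong_transv12 imat_cong_transv21
        imat_cong_transv_conj cong_minus_minus_iff)
  ultimately show ?thesis
    using imat_cong_mult_modulus qm represented_cong by (metis imat_mult_id(1))
qed

lemma represented_transv21:
  assumes "0 < n"
  shows "represented n (transv21 r)"
proof -
  interpret flip: abc_monoid "imat_flip ` \<Gamma>" b a c by (rule abc_monoid_flip)
  obtain N where "N \<in> \<Gamma>" "imat_cong (imat_flip N) (transv12 (- r)) n"
    using flip.represented_transv12[OF assms] unfolding flip.represented_def by blast
  then show ?thesis
    unfolding represented_def using imat_cong_flip by fastforce
qed

lemma represented_elementary: "P \<in> elementary \<Longrightarrow> 0 < n \<Longrightarrow> represented n P"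
proof (induction P rule: elementary.induct)
  case elementary_id
  then show ?case using id_mem imat_cong_refl unfolding represented_def by blast
qed (simp_all add: represented_mult represented_transv12 represented_transv21)

theorem totally_noncongruent: "totally_noncongruence \<Gamma>"
  unfolding totally_noncongruence_def
proof (intro allI impI)
  fix n :: int and M
  assume "1 \<le> n" "imat_det M mod n = 1 mod n"
  then obtain Y where Y: "imat_det Y = 1" "imat_cong Y M n"
    using det_one_lift[of M n] by (auto simp: cong_def)
  have "represented n Y"
    using represented_elementary[OF det_one_elementary[OF Y(1)]] \<open>1 \<le> n\<close> by simp
  then show "\<exists>N\<in>\<Gamma>. imat_cong N M n"
    using represented_cong[OF _ Y(2)] unfolding represented_def by blast
qed

end

lemma word_act_append: "word_act G (w1 @ w2) p = word_act G w1 (word_act G w2 p)"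
  by (induction w1) auto

lemma word_mat_append: "word_mat (w1 @ w2) = word_mat w1 ** word_mat w2"
  by (induction w1) (auto simp: imat_mult_assoc)

definition pair_stabilizer :: "('a, 'b) monoid_scheme \<Rightarrow> 'a \<Rightarrow> 'a \<Rightarrow> imat2 set" where
  "pair_stabilizer G u v = {word_mat w | w. word_act G w (u, v) = (u, v)}"

lemma pair_stabilizer_subset_veech_group: "pair_stabilizer G u v \<subseteq> veech_group G u v"
proof -
  have "origami_equiv G (u, v) (u, v)"
    unfolding origami_equiv_def using iso_set_refl by force
  then show ?thesis
    unfolding pair_stabilizer_def veech_group_def by auto
qed

lemma totally_noncongruence_mono:
  "\<Gamma> \<subseteq> \<Delta> \<Longrightarrow> totally_noncongruence \<Gamma> \<Longrightarrow> totally_noncongruence \<Delta>"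
  unfolding totally_noncongruence_def by blast

definition shear_word :: "gen list" where "shear_word = [GS, GT, GSinv]"
definition shear_inv_word :: "gen list" where "shear_inv_word = [GS, GTinv, GSinv]"

lemma word_mat_replicate_GT: "word_mat (replicate k GT) = transv12 (int k)"
  by (induction k) (auto simp: transv12_def imat_id_def imat_mult_def gen_mat_def)

lemma word_mat_shear_pow: "word_mat (concat (replicate k shear_word)) = transv21 (- int k)"
  by (induction k)
    (auto simp: transv21_def imat_id_def imat_mult_def gen_mat_def word_mat_append shear_word_def)

lemma word_mat_shear: "word_mat shear_word = transv21 (- 1)"
  and word_mat_shear_inv: "word_mat shear_inv_word = transv21 1"
  by (simp_all add: shear_word_def shear_inv_word_def transv21_def imat_id_def imat_mult_def
      gen_mat_def)

lemma word_mat_shear_conj: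
  "word_mat (shear_inv_word @ replicate k GT @ shear_word) = transv_conj (int k)"
  by (simp add: word_mat_append word_mat_replicate_GT word_mat_shear word_mat_shear_inv
      transv_conj_def imat_mult_assoc)

context group
begin

lemma word_act_replicate_GT:
  assumes "p \<in> carrier G" "q \<in> carrier G"
  shows "word_act G (replicate k GT) (p, q) = (p, q \<otimes> inv p [^] k)"
  using assms by (induction k) (simp_all add: gen_act_def m_assoc)

lemma word_act_shear:
    "p \<in> carrier G \<Longrightarrow> q \<in> carrier G \<Longrightarrow> word_act G shear_word (p, q) = (q \<otimes> p, q)"
  and word_act_shear_inv:
    "p \<in> carrier G \<Longrightarrow> q \<in> carrier G \<Longrightarrow> word_act G shear_inv_word (p, q) = (inv q \<otimes> p, q)"
  by (simp_all add: shear_word_def shear_inv_word_def gen_act_def inv_mult_group)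

lemma word_act_shear_pow:
  assumes "p \<in> carrier G" "q \<in> carrier G"
  shows "word_act G (concat (replicate k shear_word)) (p, q) = (q [^] k \<otimes> p, q)"
proof (induction k)
  case (Suc k)
  have "q \<otimes> (q [^] k \<otimes> p) = q [^] Suc k \<otimes> p"
    using assms by (metis nat_pow_Suc2 m_assoc nat_pow_closed)
  then show ?case
    using Suc assms by (simp add: word_act_append word_act_shear)
qed (simp add: assms)

lemma word_act_shear_conj:
  assumes "u \<in> carrier G" "v \<in> carrier G"
  shows "word_act G (shear_inv_word @ replicate (ord (v \<otimes> u)) GT @ shear_word) (u, v) = (u, v)"
proof -
  have "word_act G (replicate (ord (v \<otimes> u)) GT @ shear_word) (u, v) = (v \<otimes> u, v)"
    using assms by (simp add: word_act_append word_act_shear word_act_replicate_GT nat_pow_inv)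
  moreover have "inv v \<otimes> (v \<otimes> u) = u"
    using assms by (simp add: m_assoc[symmetric])
  ultimately show ?thesis
    using assms by (simp add: word_act_append word_act_shear_inv)
qed

lemma pair_stabilizer_abc_monoid:
  assumes "u \<in> carrier G" "v \<in> carrier G"
    and "coprime (ord v) (ord u)" "coprime (ord u) (ord (v \<otimes> u))"
    and "coprime (ord v) (ord (v \<otimes> u))"
  shows "abc_monoid (pair_stabilizer G u v) (ord v) (ord u) (ord (v \<otimes> u))"
proof
  show "P ** R \<in> pair_stabilizer G u v"
    if PR: "P \<in> pair_stabilizer G u v" "R \<in> pair_stabilizer G u v" for P R
  proof -
    obtain w1 w2 where "P = word_mat w1" "word_act G w1 (u, v) = (u, v)"
      "R = word_mat w2" "word_act G w2 (u, v) = (u, v)"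
      using PR by (auto simp: pair_stabilizer_def)
    then show ?thesis unfolding pair_stabilizer_def
      by (intro CollectI exI[of _ "w1 @ w2"]) (simp add: word_mat_append word_act_append)
  qed
  show "imat_id \<in> pair_stabilizer G u v"
    unfolding pair_stabilizer_def by (intro CollectI exI[of _ "[]"]) simp
  show "transv12 (ord u) \<in> pair_stabilizer G u v"
    unfolding pair_stabilizer_def using assms
    by (intro CollectI exI[of _ "replicate (ord u) GT"])
      (simp add: word_mat_replicate_GT word_act_replicate_GT nat_pow_inv)
  show "transv21 (- ord v) \<in> pair_stabilizer G u v"
    unfolding pair_stabilizer_def using assms
    by (intro CollectI exI[of _ "concat (replicate (ord v) shear_word)"])
      (simp add: word_mat_shear_pow word_act_shear_pow)
  show "transv_conj (ord (v \<otimes> u)) \<in> pair_stabilizer G u v"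
    unfolding pair_stabilizer_def using assms
    by (intro CollectI exI[of _ "shear_inv_word @ replicate (ord (v \<otimes> u)) GT @ shear_word"])
      (simp add: word_mat_shear_conj word_act_shear_conj)
qed (use assms in simp_all)

end

theorem mainTheorem4:
  fixes G (structure) and x y :: 'a and a b c :: nat
  assumes "group G"
    and "finite (carrier G)"
    and "x \<in> carrier G" and "y \<in> carrier G"
    and "generate G {x, y} = carrier G"
    and "a > 0" and "b > 0" and "c > 0"
    and "coprime a b" and "coprime b c" and "coprime a c"
    and "group.ord G x = a" and "group.ord G y = b" and "group.ord G (x \<otimes> y) = c"
  shows "totally_noncongruence (veech_group G y x)"
proof -
  interpret group G by fact
  have "abc_monoid (pair_stabilizer G y x) a b c"
    using pair_stabilizer_abc_monoid[of y x] assms by (simp add: coprime_commute)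
  then have "totally_noncongruence (pair_stabilizer G y x)"
    by (rule abc_monoid.totally_noncongruent)
  then show ?thesis
    by (rule totally_noncongruence_mono[OF pair_stabilizer_subset_veech_group])
qed

end
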